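(* For every integer $q\equiv 4\pmod 6$ there exists a $q$-ary $3$-frameproof code of length $5$ and cardinality $\frac{5}{3}(q-1)^2+1$.
   Context: For $P\subseteq F^l$ over a finite alphabet $F$, $desc(P)=\{x\in F^l: \text{for every } i\in\{1,\ldots,l\} \text{ there is } y\in P \text{ with } x_i=y_i\}$. For an integer $c\geq 2$, a $c$-frameproof code of length $l$ is a subset $C\subseteq F^l$ with $desc(P)\cap C=P$ for every $P\subseteq C$ with $|P|\leq c$; it is $q$-ary if $|F|=q$. *)

theory Defs
  imports Complex_Main
begin

definition words :: "'a set \<Rightarrow> nat \<Rightarrow> 'a list set" where
  "words F l = {x. length x = l \<and> set x \<subseteq> F}"

definition desc :: "'a set \<Rightarrow> nat \<Rightarrow> 'a list set \<Rightarrow> 'a list set" where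
  "desc F l P = {x \<in> words F l. \<forall>i<l. \<exists>y\<in>P. x ! i = y ! i}"

definition frameproof :: "nat \<Rightarrow> 'a set \<Rightarrow> nat \<Rightarrow> 'a list set \<Rightarrow> bool" where
  "frameproof c F l C \<longleftrightarrow> C \<subseteq> words F l \<and>
     (\<forall>P. P \<subseteq> C \<and> card P \<le> c \<longrightarrow> desc F l P \<inter> C = P)"

end

theory Submission
  imports Defs "HOL-Number_Theory.Cong"
begin

(* Write q = 3m + 1 with m odd and take the alphabet Z_m x Z_3 together with a symbol oo.
   Besides the all-oo word, for every position s of Z_5, all a, b of Z_m and every g of Z_3
   the code contains the word with oo at s and, at position s + k (k = 1, ..., 4), the pair
   (L_k(a, b), g + e_k), where L = a, b, a + b, a - b and e = 0, 1, 1, 0. These are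
   15 m^2 + 1 = 5/3 (q - 1)^2 + 1 words. Two different codewords agree in at most one of the four
   finite positions of the first one: if their oo sits at the same place, any two of the forms
   L_k determine (a, b) because 2 is invertible modulo m, and the Z_3 part then determines g;
   otherwise, subtracting the Z_3 parts at two common positions eliminates g and g', and the
   pattern e excludes the relation that remains. So a codeword that descends from a set P of
   codewords it does not belong to needs a different parent for each of its four finite
   positions, whence |P| >= 4. *)

definition agrees_at_most_once :: "'a list \<Rightarrow> 'a list \<Rightarrow> nat set \<Rightarrow> bool" where
  "agrees_at_most_once x y I \<longleftrightarrow> (\<forall>i\<in>I. \<forall>j\<in>I. x ! i = y ! i \<longrightarrow> x ! j = y ! j \<longrightarrow> i = j)"

lemma frameproof_if_agrees_at_most_once:
  assumes fin: "finite C" and words: "C \<subseteq> words F l"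
    and few_agreements: "\<And>x. x \<in> C \<Longrightarrow> \<exists>S. c < card ({..<l} - S) \<and>
                   (\<forall>y\<in>C. y \<noteq> x \<longrightarrow> agrees_at_most_once x y ({..<l} - S))"
  shows "frameproof c F l C"
  unfolding frameproof_def
proof (intro conjI allI impI)
  fix P assume P: "P \<subseteq> C \<and> card P \<le> c"
  show "desc F l P \<inter> C = P"
  proof
    show "P \<subseteq> desc F l P \<inter> C"
      using P words unfolding desc_def by blast
  next
    show "desc F l P \<inter> C \<subseteq> P"
    proof (rule subsetI, rule ccontr)
      fix x assume x: "x \<in> desc F l P \<inter> C" and "x \<notin> P"
      obtain S where card_S: "c < card ({..<l} - S)"
        and once: "\<forall>y\<in>C. y \<noteq> x \<longrightarrow> agrees_at_most_once x y ({..<l} - S)"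
        using few_agreements x by blast
      have "\<forall>i\<in>{..<l} - S. \<exists>y\<in>P. x ! i = y ! i"
        using x unfolding desc_def by auto
      then obtain parent where parent: "\<And>i. i \<in> {..<l} - S \<Longrightarrow> parent i \<in> P \<and> x ! i = parent i ! i"
        by metis
      have "inj_on parent ({..<l} - S)"
      proof (rule inj_onI)
        fix i j assume ij: "i \<in> {..<l} - S" "j \<in> {..<l} - S" "parent i = parent j"
        then have "parent i \<in> C" "parent i \<noteq> x" using parent P \<open>x \<notin> P\<close> by auto
        with once ij parent show "i = j" unfolding agrees_at_most_once_def by metis
      qed
      moreover have "parent ` ({..<l} - S) \<subseteq> P" using parent by blast
      ultimately have "card ({..<l} - S) \<le> card P"
        using card_inj_on_le P fin finite_subset by metis
      with P card_S show False by simp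
    qed
  qed
qed (use words in blast)

definition offset :: "nat \<Rightarrow> nat \<Rightarrow> nat" where
  "offset s p = (p + 5 - s) mod 5"

definition lin_form :: "nat \<Rightarrow> int \<Rightarrow> int \<Rightarrow> int" where
  "lin_form k a b = (if k = 1 then a else if k = 2 then b else if k = 3 then a + b else a - b)"

definition tag_shift :: "nat \<Rightarrow> nat" where
  "tag_shift k = (if k = 2 \<or> k = 3 then 1 else 0)"

(* The pair (u, v) of Z_m x Z_3 is encoded as the symbol 3u + v, and 3m plays the role of oo.
   Position p of the codeword with oo at s has k = offset s p, L_k = lin_form k, e_k = tag_shift k. *)

definition entry :: "nat \<Rightarrow> nat \<Rightarrow> nat \<Rightarrow> nat \<Rightarrow> nat \<Rightarrow> nat \<Rightarrow> nat" where
  "entry m s a b g p =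
     3 * nat (lin_form (offset s p) (int a) (int b) mod int m) + (g + tag_shift (offset s p)) mod 3"

definition codeword :: "nat \<Rightarrow> nat \<Rightarrow> nat \<Rightarrow> nat \<Rightarrow> nat \<Rightarrow> nat list" where
  "codeword m s a b g = map (\<lambda>p. if p = s then 3 * m else entry m s a b g p) [0..<5]"

definition params :: "nat \<Rightarrow> (nat \<times> nat \<times> nat \<times> nat) set" where
  "params m = {..<5} \<times> {..<m} \<times> {..<m} \<times> {..<3}"

definition code :: "nat \<Rightarrow> nat list set" where
  "code m = insert (replicate 5 (3 * m)) ((\<lambda>(s, a, b, g). codeword m s a b g) ` params m)"

lemma entry_less: "0 < m \<Longrightarrow> entry m s a b g p < 3 * m"
proof -
  assume "0 < m"
  then have "nat (lin_form (offset s p) (int a) (int b) mod int m) < m"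
    by (simp add: nat_less_iff)
  then show ?thesis unfolding entry_def by linarith
qed

lemma entry_eq_iff:
  assumes "0 < m"
  shows "entry m s a b g p = entry m t a' b' g' p \<longleftrightarrow>
    [lin_form (offset s p) (int a) (int b) = lin_form (offset t p) (int a') (int b')] (mod int m) \<and>
    [g + tag_shift (offset s p) = g' + tag_shift (offset t p)] (mod 3)"
proof -
  have digits: "3 * u + v = 3 * u' + v' \<longleftrightarrow> u = u' \<and> v = v'" if "v < 3" "v' < 3" for u v u' v' :: nat
    using that by presburger
  show ?thesis
    using assms unfolding entry_def by (simp add: digits eq_nat_nat_iff cong_def)
qed

lemma length_codeword [simp]: "length (codeword m s a b g) = 5"
  by (simp add: codeword_def)

lemma nth_codeword:
  "p < 5 \<Longrightarrow> codeword m s a b g ! p = (if p = s then 3 * m else entry m s a b g p)"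
  by (simp add: codeword_def)

lemma nth_codeword_eq_infinity_iff:
  "0 < m \<Longrightarrow> p < 5 \<Longrightarrow> codeword m s a b g ! p = 3 * m \<longleftrightarrow> p = s"
  using entry_less[of m s a b g p] by (simp add: nth_codeword)

lemma less_5_cases: "(p::nat) < 5 \<Longrightarrow> p = 0 \<or> p = 1 \<or> p = 2 \<or> p = 3 \<or> p = 4"
  by auto

lemma offset_mem: "p < 5 \<Longrightarrow> s < 5 \<Longrightarrow> p \<noteq> s \<Longrightarrow> offset s p \<in> {1, 2, 3, 4}"
  using less_5_cases[of p] less_5_cases[of s] unfolding offset_def by auto

lemma offset_inj: "i < 5 \<Longrightarrow> j < 5 \<Longrightarrow> s < 5 \<Longrightarrow> offset s i = offset s j \<Longrightarrow> i = j"
  using less_5_cases[of i] less_5_cases[of j] less_5_cases[of s] unfolding offset_def by auto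

lemma lin_form_diff: "lin_form k a b - lin_form k a' b' = lin_form k (a - a') (b - b')"
  by (simp add: lin_form_def)

lemma dvd_two_lin_forms:
  fixes m x y :: int
  assumes "odd m" "k \<in> {1, 2, 3, 4}" "k' \<in> {1, 2, 3, 4}" "k \<noteq> k'"
    and "m dvd lin_form k x y" "m dvd lin_form k' x y"
  shows "m dvd x \<and> m dvd y"
proof -
  have sum_diff: "m dvd x \<and> m dvd y" if "m dvd x + y" "m dvd x - y"
  proof -
    have "m dvd 2 * x" using dvd_add[OF that] by (simp add: algebra_simps)
    with \<open>odd m\<close> have "m dvd x" by (simp add: coprime_dvd_mult_right_iff)
    with that show ?thesis by (simp add: dvd_add_right_iff)
  qed
  from assms show ?thesis
    unfolding lin_form_def
    by (auto simp: dvd_add_right_iff dvd_add_left_iff dvd_diff_right_iff dvd_diff_left_iff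
        dest: sum_diff)
qed

lemma lin_forms_determine:
  fixes m a b a' b' :: int
  assumes "odd m" "k \<in> {1, 2, 3, 4}" "k' \<in> {1, 2, 3, 4}" "k \<noteq> k'"
    and "[lin_form k a b = lin_form k a' b'] (mod m)" "[lin_form k' a b = lin_form k' a' b'] (mod m)"
  shows "[a = a'] (mod m) \<and> [b = b'] (mod m)"
proof -
  have "m dvd lin_form k (a - a') (b - b')" "m dvd lin_form k' (a - a') (b - b')"
    using assms(5,6) by (simp_all only: cong_iff_dvd_diff lin_form_diff)
  with assms(1-4) have "m dvd a - a' \<and> m dvd b - b'"
    by (intro dvd_two_lin_forms)
  then show ?thesis by (simp only: cong_iff_dvd_diff)
qed

lemma cong_add_cross_cancel_nat:
  fixes n g g' x y z w :: nat
  assumes "[g + x = g' + y] (mod n)" "[g + z = g' + w] (mod n)"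
  shows "[x + w = y + z] (mod n)"
proof -
  have "[(x + w) + (g + g') = (y + z) + (g + g')] (mod n)"
    using cong_add[OF assms(1) cong_sym[OF assms(2)]] by (simp add: ac_simps)
  then show ?thesis by (simp only: cong_add_rcancel_nat)
qed

lemma tag_shift_separates:
  assumes "s < 5" "t < 5" "i < 5" "j < 5" "s \<noteq> t" "i \<noteq> j" "i \<notin> {s, t}" "j \<notin> {s, t}"
  shows "\<not> [tag_shift (offset s i) + tag_shift (offset t j) =
            tag_shift (offset t i) + tag_shift (offset s j)] (mod 3)"
  using less_5_cases[OF assms(1)] less_5_cases[OF assms(2)] less_5_cases[OF assms(3)]
    less_5_cases[OF assms(4)] assms(5-)
  by (elim disjE) (simp_all add: tag_shift_def offset_def cong_def)

lemma codewords_agree_at_most_once: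
  assumes "odd m" and params: "(s, a, b, g) \<in> params m" "(t, a', b', g') \<in> params m"
    and distinct: "(s, a, b, g) \<noteq> (t, a', b', g')"
  shows "agrees_at_most_once (codeword m s a b g) (codeword m t a' b' g') ({..<5} - {s})"
  unfolding agrees_at_most_once_def
proof (intro ballI impI, rule ccontr)
  fix i j
  assume i: "i \<in> {..<5} - {s}" and j: "j \<in> {..<5} - {s}" and "i \<noteq> j"
    and agree: "codeword m s a b g ! i = codeword m t a' b' g' ! i"
      "codeword m s a b g ! j = codeword m t a' b' g' ! j"
  have "0 < m" using \<open>odd m\<close> by (rule odd_pos)
  have ranges: "s < 5" "a < m" "b < m" "g < 3" "t < 5" "a' < m" "b' < m" "g' < 3"
    using params by (simp_all add: params_def)
  have not_t: "p \<noteq> t"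
    if "p \<in> {..<5} - {s}" "codeword m s a b g ! p = codeword m t a' b' g' ! p" for p
    using that nth_codeword_eq_infinity_iff[OF \<open>0 < m\<close>, of p s a b g]
      nth_codeword_eq_infinity_iff[OF \<open>0 < m\<close>, of p t a' b' g'] by auto
  have "i \<noteq> t" "j \<noteq> t"
    using not_t[OF i agree(1)] not_t[OF j agree(2)] .
  then have "entry m s a b g i = entry m t a' b' g' i" "entry m s a b g j = entry m t a' b' g' j"
    using agree i j by (simp_all add: nth_codeword)
  then have forms:
      "[lin_form (offset s i) (int a) (int b) = lin_form (offset t i) (int a') (int b')] (mod int m)"
      "[lin_form (offset s j) (int a) (int b) = lin_form (offset t j) (int a') (int b')] (mod int m)"
    and tags: "[g + tag_shift (offset s i) = g' + tag_shift (offset t i)] (mod 3)"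
      "[g + tag_shift (offset s j) = g' + tag_shift (offset t j)] (mod 3)"
    by (simp_all only: entry_eq_iff[OF \<open>0 < m\<close>])
  show False
  proof (cases "s = t")
    case True
    have "[g = g'] (mod 3)"
      using tags(1) by (simp only: True cong_add_rcancel_nat)
    then have "g = g'"
      using ranges(4,8) by (rule cong_less_modulus_unique_nat)
    have offsets: "offset s i \<in> {1, 2, 3, 4}" "offset s j \<in> {1, 2, 3, 4}" "offset s i \<noteq> offset s j"
      using i j ranges(1) \<open>i \<noteq> j\<close> offset_mem offset_inj by blast+
    have "[int a = int a'] (mod int m) \<and> [int b = int b'] (mod int m)"
      using \<open>odd m\<close> by (intro lin_forms_determine[OF _ offsets forms[folded True]]) simp
    then have "a = a'" "b = b'"
      using ranges cong_less_modulus_unique_nat by (simp_all only: cong_int_iff) blast+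
    with True \<open>g = g'\<close> distinct show False by simp
  next
    case False
    from tags have "[tag_shift (offset s i) + tag_shift (offset t j) =
        tag_shift (offset t i) + tag_shift (offset s j)] (mod 3)"
      by (rule cong_add_cross_cancel_nat)
    with tag_shift_separates[OF ranges(1,5)] False i j \<open>i \<noteq> j\<close> \<open>i \<noteq> t\<close> \<open>j \<noteq> t\<close>
    show False by simp
  qed
qed

lemma codeword_ne_infinity_word:
  assumes "0 < m" "s < 5"
  shows "codeword m s a b g \<noteq> replicate 5 (3 * m)"
proof
  assume "codeword m s a b g = replicate 5 (3 * m)"
  then have "codeword m s a b g ! ((s + 1) mod 5) = 3 * m" by simp
  moreover have "(s + 1) mod 5 \<noteq> s" using less_5_cases[OF \<open>s < 5\<close>] by auto
  ultimately show False using nth_codeword_eq_infinity_iff[OF \<open>0 < m\<close>] by simp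
qed

lemma inj_on_codeword:
  assumes "odd m"
  shows "inj_on (\<lambda>(s, a, b, g). codeword m s a b g) (params m)"
proof (rule inj_onI, rule ccontr)
  fix u v assume u: "u \<in> params m" and v: "v \<in> params m" and "u \<noteq> v"
    and eq: "(\<lambda>(s, a, b, g). codeword m s a b g) u = (\<lambda>(s, a, b, g). codeword m s a b g) v"
  obtain s a b g t a' b' g' where uv: "u = (s, a, b, g)" "v = (t, a', b', g')"
    by (cases u, cases v) auto
  have "agrees_at_most_once (codeword m s a b g) (codeword m t a' b' g') ({..<5} - {s})"
    using codewords_agree_at_most_once \<open>odd m\<close> u v \<open>u \<noteq> v\<close> uv by blast
  moreover have "codeword m s a b g = codeword m t a' b' g'" using eq uv by simp
  moreover have "s < 5" using u uv by (simp add: params_def)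
  then have "(s + 1) mod 5 \<in> {..<5} - {s}" "(s + 2) mod 5 \<in> {..<5} - {s}" "(s + 1) mod 5 \<noteq> (s + 2) mod 5"
    by (simp; presburger)+
  ultimately show False unfolding agrees_at_most_once_def by metis
qed

lemma card_code:
  assumes "odd m"
  shows "card (code m) = 15 * m\<^sup>2 + 1"
proof -
  have "0 < m" using \<open>odd m\<close> by (rule odd_pos)
  have "replicate 5 (3 * m) \<notin> (\<lambda>(s, a, b, g). codeword m s a b g) ` params m"
    using codeword_ne_infinity_word[OF \<open>0 < m\<close>] by (clarsimp simp: params_def) metis
  then have "card (code m) = card ((\<lambda>(s, a, b, g). codeword m s a b g) ` params m) + 1"
    unfolding code_def by (simp add: params_def)
  also have "\<dots> = card (params m) + 1"
    using card_image[OF inj_on_codeword[OF \<open>odd m\<close>]] by simp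
  also have "\<dots> = 15 * m\<^sup>2 + 1"
    by (simp add: params_def card_cartesian_product power2_eq_square)
  finally show ?thesis .
qed

lemma code_subset_words:
  assumes "0 < m"
  shows "code m \<subseteq> words {..<3 * m + 1} 5"
proof -
  have "set (codeword m s a b g) \<subseteq> {..<3 * m + 1}" for s a b g
    using entry_less[OF assms] by (auto simp: codeword_def less_Suc_eq)
  then show ?thesis
    unfolding code_def words_def by auto blast
qed

lemma code_agrees_at_most_once:
  assumes "odd m" "x \<in> code m"
  shows "\<exists>S. 3 < card ({..<5} - S) \<and> (\<forall>y\<in>code m. y \<noteq> x \<longrightarrow> agrees_at_most_once x y ({..<5} - S))"
proof -
  have "0 < m" using \<open>odd m\<close> by (rule odd_pos)
  show ?thesis
  proof (cases "x = replicate 5 (3 * m)")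
    case True
    have "agrees_at_most_once x y {..<5}" if y: "y \<in> code m" "y \<noteq> x" for y
    proof -
      obtain t a b g where y_eq: "y = codeword m t a b g"
        using y True by (auto simp: code_def)
      have "i = t" if "i < 5" "x ! i = y ! i" for i
        using that True y_eq nth_codeword_eq_infinity_iff[OF \<open>0 < m\<close>, of i t a b g] by simp
      then show ?thesis unfolding agrees_at_most_once_def by blast
    qed
    then show ?thesis by (intro exI[of _ "{}"]) simp
  next
    case False
    then obtain s a b g where x: "x = codeword m s a b g" "(s, a, b, g) \<in> params m"
      using \<open>x \<in> code m\<close> by (auto simp: code_def)
    have "agrees_at_most_once x y ({..<5} - {s})" if "y \<in> code m" "y \<noteq> x" for y
    proof (cases "y = replicate 5 (3 * m)")
      case True
      with x \<open>0 < m\<close> show ?thesis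
        by (auto simp: agrees_at_most_once_def nth_codeword_eq_infinity_iff)
    next
      case False
      then obtain t a' b' g' where "y = codeword m t a' b' g'" "(t, a', b', g') \<in> params m"
        using \<open>y \<in> code m\<close> by (auto simp: code_def)
      with x \<open>y \<noteq> x\<close> \<open>odd m\<close> show ?thesis
        using codewords_agree_at_most_once by blast
    qed
    moreover have "card ({..<5::nat} - {s}) = 4" using x(2) by (simp add: params_def)
    ultimately show ?thesis by (intro exI[of _ "{s}"]) simp
  qed
qed

lemma frameproof_code:
  assumes "odd m"
  shows "frameproof 3 {..<3 * m + 1} 5 (code m)"
proof (rule frameproof_if_agrees_at_most_once)
  show "finite (code m)" by (simp add: code_def params_def)
  show "code m \<subseteq> words {..<3 * m + 1} 5"
    using odd_pos[OF assms] by (rule code_subset_words)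
qed (rule code_agrees_at_most_once[OF assms])

theorem theorem3:
  fixes q :: nat
  assumes "q mod 6 = 4"
  shows "\<exists>(F :: nat set) (C :: nat list set). finite F \<and> card F = q \<and> frameproof 3 F 5 C \<and>
           real (card C) = 5 / 3 * (real q - 1)^2 + 1"
proof -
  define m where "m = 2 * (q div 6) + 1"
  have "odd m" by (simp add: m_def)
  have q: "q = 3 * m + 1" using assms unfolding m_def by presburger
  have "real (card (code m)) = 5 / 3 * (real q - 1)^2 + 1"
    by (simp add: card_code[OF \<open>odd m\<close>] q power2_eq_square)
  then show ?thesis
    using frameproof_code[OF \<open>odd m\<close>] q by (intro exI[of _ "{..<q}"] exI[of _ "code m"]) simp
qed

end
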